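(* Let $n\ge2$, $f\in\mathbb R^n$, $Y=f+\xi$, where $\xi$ has independent coordinates satisfying, for some known $\sigma>0$ and all $i=1,\dots,n$, $$\log\mathbb E\big[e^{\lambda\xi_i}\big]\le\frac{\lambda^2\sigma^2}{2}\qquad\text{for all }\lambda\in\mathbb R.$$ Let $\{S_m: m\in\mathcal M\}$ be a countable nonempty collection of linear subspaces of $\mathbb R^n$ with $D_m=\dim S_m$. Let $\Delta_m\ge0$ satisfy $\Sigma=\sum_{m\in\mathcal M}e^{-\Delta_m}<\infty$, and let $K>1$. Let $\mathrm{pen}:\mathcal M\to\mathbb R_+$ satisfy $$\mathrm{pen}(m)\ge K\kappa^2\sigma^2(D_m+\Delta_m)\qquad\text{for all }m\in\mathcal M.$$ Let $\hat m$ be any minimizer over $\mathcal M$ of $\mathrm{crit}(m)=|Y-\hat f_m|_2^2+\mathrm{pen}(m)$, where $\hat f_m=\Pi_{S_m}Y$. Then $$\mathbb E\big[|f-\hat f_{\hat m}|_2^2\big]\le\frac{K(K^2+K-1)}{(K-1)^3}\inf_{m\in\mathcal M}\Big(\mathbb E\big[|f-\hat f_m|_2^2\big]+\mathrm{pen}(m)\Big)+\frac{K^3\kappa^2\sigma^2}{(K-1)^2}\Sigma.$$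
   Context: $|x|_2$ is the Euclidean norm on $\mathbb R^n$, $\Pi_S$ is the orthogonal projector onto a linear subspace $S$, and $\kappa=18$. *)

theory Defs
  imports "HOL-Probability.Probability"
begin

definition kappa :: real where "kappa = 18"

definition orth_proj :: "('a::euclidean_space) set \<Rightarrow> 'a \<Rightarrow> 'a" where
  "orth_proj S y = (THE p. p \<in> S \<and> (\<forall>v\<in>S. inner (y - p) v = 0))"

end

theory Submission
  imports Defs
begin

(* Write the loss of model m as bias m + |Pi_m xi|^2, where bias m = |f - Pi_m f|^2.
   Comparing the criterion at the selected model mhat with that at an arbitrary model m and
   splitting the cross term 2 <f - Pi_mhat f, xi> by AM-GM gives, pathwise,
     (1 - 1/K) loss mhat <= bias m + pen m + 2 <f - Pi_m f, xi> + (K Z_mhat - pen mhat),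
   where Z_m is the squared norm of the projection of xi onto S_m + span {f - Pi_m f}.
   The middle term is centred. Averaging exp <g, xi> over a standard Gaussian g and applying
   the sub-Gaussian bound coordinatewise gives E exp (Z_m / (4 sigma^2)) <= sqrt 2 ^ (D_m + 1);
   a Chernoff bound and the size of the penalty then give
   E (K Z_m - pen m)_+ <= 4 K sigma^2 exp (- Delta_m), and summing over all models controls
   the last term at the random model mhat. The constant obtained in front of bias m + pen m is
   K/(K - 1), smaller than the stated one. *)

section \<open>Gaussian integrals\<close>

abbreviation std_normal :: "real measure" where
  "std_normal \<equiv> density lborel std_normal_density"

lemma prob_space_std_normal: "prob_space std_normal"
  using prob_space_normal_density[of 1 0] by simp

lemma nn_integral_normal_density: "s > 0 \<Longrightarrow> (\<integral>\<^sup>+x. ennreal (normal_density m s x) \<partial>lborel) = 1"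
  by (subst nn_integral_eq_integral) auto

lemma nn_integral_std_normal_exp_linear:
  "(\<integral>\<^sup>+x. ennreal (exp (c * x)) \<partial>std_normal) = ennreal (exp (c\<^sup>2 / 2))"
proof -
  have "std_normal_density x * exp (c * x) = exp (c\<^sup>2 / 2) * normal_density c 1 x" for x
  proof -
    have "exp (c * x) * exp (- x\<^sup>2 / 2) = exp (c\<^sup>2 / 2) * exp (- (x - c)\<^sup>2 / 2)"
      unfolding exp_add[symmetric] by (rule arg_cong[where f=exp]) (simp add: power2_eq_square field_simps)
    then show ?thesis unfolding normal_density_def by (simp add: std_normal_density_def mult.commute)
  qed
  then have "(\<integral>\<^sup>+x. ennreal (exp (c * x)) \<partial>std_normal)
      = (\<integral>\<^sup>+x. ennreal (exp (c\<^sup>2 / 2)) * ennreal (normal_density c 1 x) \<partial>lborel)"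
    by (subst nn_integral_density) (auto simp: ennreal_mult[symmetric])
  also have "\<dots> = ennreal (exp (c\<^sup>2 / 2))"
    by (subst nn_integral_cmult) (auto simp: nn_integral_normal_density)
  finally show ?thesis .
qed

lemma nn_integral_std_normal_exp_square:
  "(\<integral>\<^sup>+x. ennreal (exp (x\<^sup>2 / 4)) \<partial>std_normal) = ennreal (sqrt 2)"
proof -
  have "std_normal_density x * exp (x\<^sup>2 / 4) = sqrt 2 * normal_density 0 (sqrt 2) x" for x
  proof -
    have "exp (- x\<^sup>2 / 2) * exp (x\<^sup>2 / 4) = exp (- x\<^sup>2 / 4)"
      unfolding exp_add[symmetric] by (rule arg_cong[where f=exp]) simp
    moreover have "sqrt (2 * pi * (sqrt 2)\<^sup>2) = sqrt 2 * sqrt (2 * pi)"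
      by (simp add: real_sqrt_mult[symmetric])
    ultimately show ?thesis unfolding normal_density_def std_normal_density_def
      by (simp add: field_simps)
  qed
  then have "(\<integral>\<^sup>+x. ennreal (exp (x\<^sup>2 / 4)) \<partial>std_normal)
      = (\<integral>\<^sup>+x. ennreal (sqrt 2) * ennreal (normal_density 0 (sqrt 2) x) \<partial>lborel)"
    by (subst nn_integral_density) (auto simp: ennreal_mult[symmetric])
  also have "\<dots> = ennreal (sqrt 2)"
    by (subst nn_integral_cmult) (auto simp: nn_integral_normal_density)
  finally show ?thesis .
qed

lemma measurable_std_normal_component[measurable]:
  "u \<in> B \<Longrightarrow> (\<lambda>g. g u) \<in> borel_measurable (PiM B (\<lambda>_. std_normal))"
  using measurable_component_singleton[of u B "\<lambda>_. std_normal"]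
  by (simp add: measurable_cong_sets[OF refl sets_density] del: measurable_component_singleton)

lemma product_prob_space_std_normal: "product_prob_space (\<lambda>_. std_normal)"
  unfolding product_prob_space_def product_sigma_finite_def product_prob_space_axioms_def
  using prob_space_std_normal prob_space_imp_sigma_finite by blast

lemma nn_integral_std_normal_exp_inner:
  assumes B: "finite B"
  shows "(\<integral>\<^sup>+g. ennreal (exp (t * inner (\<Sum>u\<in>B. g u *\<^sub>R u) x)) \<partial>PiM B (\<lambda>_. std_normal))
    = ennreal (exp (t\<^sup>2 * (\<Sum>u\<in>B. (inner u x)\<^sup>2) / 2))"
proof -
  interpret product_prob_space "\<lambda>_. std_normal" B by (rule product_prob_space_std_normal)
  have "(\<integral>\<^sup>+g. ennreal (exp (t * inner (\<Sum>u\<in>B. g u *\<^sub>R u) x)) \<partial>PiM B (\<lambda>_. std_normal))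
      = (\<integral>\<^sup>+g. (\<Prod>u\<in>B. ennreal (exp ((t * inner u x) * g u))) \<partial>PiM B (\<lambda>_. std_normal))"
    by (intro nn_integral_cong)
      (simp add: inner_sum_left sum_distrib_left exp_sum[OF B] prod_ennreal algebra_simps)
  also have "\<dots> = (\<Prod>u\<in>B. \<integral>\<^sup>+y. ennreal (exp ((t * inner u x) * y)) \<partial>std_normal)"
    by (rule product_nn_integral_prod[OF B]) auto
  also have "\<dots> = ennreal (exp (\<Sum>u\<in>B. (t * inner u x)\<^sup>2 / 2))"
    by (simp add: nn_integral_std_normal_exp_linear prod_ennreal exp_sum[OF B])
  also have "(\<Sum>u\<in>B. (t * inner u x)\<^sup>2 / 2) = t\<^sup>2 * (\<Sum>u\<in>B. (inner u x)\<^sup>2) / 2"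
    by (simp add: power_mult_distrib sum_distrib_left sum_divide_distrib)
  finally show ?thesis .
qed

lemma nn_integral_std_normal_exp_sum_square:
  assumes B: "finite B"
  shows "(\<integral>\<^sup>+g. ennreal (exp ((\<Sum>u\<in>B. (g u)\<^sup>2) / 4)) \<partial>PiM B (\<lambda>_. std_normal)) = ennreal (sqrt 2 ^ card B)"
proof -
  interpret product_prob_space "\<lambda>_. std_normal" B by (rule product_prob_space_std_normal)
  have "(\<integral>\<^sup>+g. ennreal (exp ((\<Sum>u\<in>B. (g u)\<^sup>2) / 4)) \<partial>PiM B (\<lambda>_. std_normal))
      = (\<integral>\<^sup>+g. (\<Prod>u\<in>B. ennreal (exp ((g u)\<^sup>2 / 4))) \<partial>PiM B (\<lambda>_. std_normal))"
    by (intro nn_integral_cong) (simp add: sum_divide_distrib exp_sum[OF B] prod_ennreal)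
  also have "\<dots> = ennreal (sqrt 2 ^ card B)"
    by (subst product_nn_integral_prod[OF B]) (auto simp: nn_integral_std_normal_exp_square ennreal_power)
  finally show ?thesis .
qed

text \<open>The size of \<open>\<kappa>\<^sup>2 = 4 \<cdot> 81\<close> is what absorbs the factor \<open>\<surd>2 ^ k \<le> e ^ (d + 1)\<close> coming from
  the Gaussian moment of a rank-\<open>k\<close> quadratic form.\<close>
lemma kappa_tail_factor_le:
  assumes "k \<le> d + 1" "\<Delta> \<ge> 0"
  shows "exp (-1) * exp (- (kappa\<^sup>2 * (real d + \<Delta>) / 4)) * sqrt 2 ^ k \<le> exp (- \<Delta>)"
proof -
  have "sqrt 2 \<le> exp (1::real)"
    using real_sqrt_le_iff[of 2 4] exp_ge_add_one_self[of 1] by simp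
  then have "sqrt 2 ^ k \<le> exp 1 ^ k" by (intro power_mono) auto
  also have "\<dots> \<le> exp 1 ^ (d + 1)" using assms(1) by (intro power_increasing) auto
  also have "\<dots> = exp (real d + 1)" by (simp add: exp_of_nat_mult[symmetric] exp_add algebra_simps)
  finally have "exp (-1) * exp (- (kappa\<^sup>2 * (real d + \<Delta>) / 4)) * sqrt 2 ^ k
      \<le> exp (-1) * exp (- (kappa\<^sup>2 * (real d + \<Delta>) / 4)) * exp (real d + 1)"
    by (intro mult_left_mono) auto
  also have "\<dots> = exp (- 80 * real d - 81 * \<Delta>)"
    by (simp add: kappa_def mult_exp_exp algebra_simps)
  also have "\<dots> \<le> exp (- \<Delta>)" using assms(2) by simp
  finally show ?thesis .
qed

section \<open>Orthonormal sets and orthogonal projections\<close>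

definition orthonormal :: "'b::real_inner set \<Rightarrow> bool" where
  "orthonormal B \<longleftrightarrow> finite B \<and> pairwise orthogonal B \<and> (\<forall>u\<in>B. norm u = 1)"

lemma orthonormal_inner:
  assumes "orthonormal B" "u \<in> B" "u' \<in> B"
  shows "inner u' u = (if u' = u then 1 else 0)"
  using assms unfolding orthonormal_def pairwise_def orthogonal_def
  by (auto simp: norm_eq_1)

lemma orthonormal_sum_mult_inner:
  assumes "orthonormal B" "u \<in> B"
  shows "(\<Sum>u'\<in>B. c u' * inner u' u) = c u"
proof -
  have "(\<Sum>u'\<in>B. c u' * inner u' u) = (\<Sum>u'\<in>B. if u' = u then c u else 0)"
    by (intro sum.cong refl) (simp add: orthonormal_inner[OF assms])
  also have "\<dots> = c u"
    using assms by (simp add: sum.delta' orthonormal_def)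
  finally show ?thesis .
qed

lemma norm_sum_scaleR_orthonormal:
  assumes "orthonormal B"
  shows "(norm (\<Sum>u\<in>B. c u *\<^sub>R u))\<^sup>2 = (\<Sum>u\<in>B. (c u)\<^sup>2)"
proof -
  have "(norm (\<Sum>u\<in>B. c u *\<^sub>R u))\<^sup>2 = (\<Sum>u\<in>B. c u * (\<Sum>u'\<in>B. c u' * inner u' u))"
    unfolding power2_norm_eq_inner
    by (simp add: inner_sum_left inner_sum_right sum_distrib_left mult.assoc)
  also have "\<dots> = (\<Sum>u\<in>B. (c u)\<^sup>2)"
    by (intro sum.cong refl) (simp add: orthonormal_sum_mult_inner[OF assms] power2_eq_square)
  finally show ?thesis .
qed

lemma orthonormal_basis_exists:
  fixes S :: "'b::euclidean_space set"
  assumes "subspace S"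
  obtains B where "orthonormal B" "span B = S" "card B = dim S"
proof -
  obtain B where "pairwise orthogonal B" "\<And>x. x \<in> B \<Longrightarrow> norm x = 1"
    "independent B" "card B = dim S" "span B = S"
    using orthonormal_basis_subspace[OF assms] by metis
  then show ?thesis
    using that independent_imp_finite unfolding orthonormal_def by blast
qed

lemma orthonormal_insert_normalized:
  assumes B: "orthonormal B" and v: "\<And>u. u \<in> B \<Longrightarrow> inner v u = 0"
  obtains B' where "orthonormal B'" "card B' \<le> card B + 1"
    "\<And>y. (\<Sum>u\<in>B'. (inner u y)\<^sup>2) = (\<Sum>u\<in>B. (inner u y)\<^sup>2) + (inner v y)\<^sup>2 / (norm v)\<^sup>2"
proof (cases "v = 0")
  case True
  then show ?thesis using that[of B] B by simp
next
  case False
  let ?e = "v /\<^sub>R norm v"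
  have fin: "finite B" using B by (simp add: orthonormal_def)
  have orth: "orthogonal ?e u" "orthogonal u ?e" if "u \<in> B" for u
    using v[OF that] by (auto simp: orthogonal_def inner_commute)
  have e_notin: "?e \<notin> B"
  proof
    assume "?e \<in> B"
    then have "inner v ?e = 0" using v by blast
    then show False using False by (simp add: power2_norm_eq_inner[symmetric] power2_eq_square)
  qed
  show ?thesis
  proof (rule that[of "insert ?e B"])
    show "orthonormal (insert ?e B)"
      using B orth False unfolding orthonormal_def by (auto simp: pairwise_insert)
    show "card (insert ?e B) \<le> card B + 1"
      using fin by (simp add: card_insert_if)
    fix y
    have "(inner ?e y)\<^sup>2 = (inner v y)\<^sup>2 / (norm v)\<^sup>2"
      by (simp add: power_mult_distrib power_inverse divide_inverse)
    then show "(\<Sum>u\<in>insert ?e B. (inner u y)\<^sup>2) = (\<Sum>u\<in>B. (inner u y)\<^sup>2) + (inner v y)\<^sup>2 / (norm v)\<^sup>2"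
      using fin e_notin by simp
  qed
qed

lemma orth_proj_eqI:
  fixes S :: "'b::euclidean_space set"
  assumes S: "subspace S" and p: "p \<in> S" "\<And>v. v \<in> S \<Longrightarrow> inner (y - p) v = 0"
  shows "orth_proj S y = p"
  unfolding orth_proj_def
proof (rule the_equality)
  show "p \<in> S \<and> (\<forall>v\<in>S. inner (y - p) v = 0)" using p by blast
  fix q assume q: "q \<in> S \<and> (\<forall>v\<in>S. inner (y - q) v = 0)"
  have "q - p \<in> S" using q p(1) S by (simp add: subspace_diff)
  then have "inner (q - p) (q - p) = inner (y - p) (q - p) - inner (y - q) (q - p)"
    by (simp add: inner_diff_left)
  also have "\<dots> = 0" using p q \<open>q - p \<in> S\<close> by simp
  finally show "q = p" by simp
qed

lemma orthonormal_residual_orthogonal: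
  assumes B: "orthonormal B" and v: "v \<in> span B"
  shows "inner (y - (\<Sum>u\<in>B. inner y u *\<^sub>R u)) v = 0"
proof -
  have "orthogonal (y - (\<Sum>u\<in>B. inner y u *\<^sub>R u)) u" if "u \<in> B" for u
    using orthonormal_sum_mult_inner[OF B that, of "inner y"]
    by (simp add: orthogonal_def inner_diff_left inner_sum_left)
  then show ?thesis
    using orthogonal_to_span[OF v] unfolding orthogonal_def by blast
qed

lemma orth_proj_eq_sum:
  fixes S :: "'b::euclidean_space set"
  assumes B: "orthonormal B" "span B = S"
  shows "orth_proj S y = (\<Sum>u\<in>B. inner y u *\<^sub>R u)"
proof (rule orth_proj_eqI)
  show "subspace S" using B(2) subspace_span by blast
  show "(\<Sum>u\<in>B. inner y u *\<^sub>R u) \<in> S"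
    using B(2) by (auto intro: span_sum span_scale span_base)
  show "inner (y - (\<Sum>u\<in>B. inner y u *\<^sub>R u)) v = 0" if "v \<in> S" for v
    using orthonormal_residual_orthogonal[OF B(1)] that B(2) by blast
qed

lemma
  fixes S :: "'b::euclidean_space set"
  assumes "subspace S"
  shows orth_proj_in_subspace: "orth_proj S y \<in> S"
    and orth_proj_orthogonal: "v \<in> S \<Longrightarrow> inner (y - orth_proj S y) v = 0"
proof -
  obtain B where B: "orthonormal B" "span B = S" using orthonormal_basis_exists[OF assms] .
  show "orth_proj S y \<in> S"
    unfolding orth_proj_eq_sum[OF B] using B(2) by (auto intro: span_sum span_scale span_base)
  show "inner (y - orth_proj S y) v = 0" if "v \<in> S"
    unfolding orth_proj_eq_sum[OF B] using orthonormal_residual_orthogonal[OF B(1)] that B(2) by blast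
qed

lemma orth_proj_add:
  fixes S :: "'b::euclidean_space set"
  assumes "subspace S"
  shows "orth_proj S (x + y) = orth_proj S x + orth_proj S y"
proof (rule orth_proj_eqI[OF assms])
  show "orth_proj S x + orth_proj S y \<in> S"
    using assms by (simp add: subspace_add orth_proj_in_subspace)
  fix v assume "v \<in> S"
  then have "inner (x - orth_proj S x) v + inner (y - orth_proj S y) v = 0"
    using assms by (simp add: orth_proj_orthogonal)
  then show "inner (x + y - (orth_proj S x + orth_proj S y)) v = 0"
    by (simp add: inner_diff_left inner_add_left)
qed

lemma norm_orth_proj:
  fixes S :: "'b::euclidean_space set"
  assumes "orthonormal B" "span B = S"
  shows "(norm (orth_proj S y))\<^sup>2 = (\<Sum>u\<in>B. (inner u y)\<^sup>2)"
  using norm_sum_scaleR_orthonormal[OF assms(1)]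
  by (simp add: orth_proj_eq_sum[OF assms] inner_commute)

lemma norm_diff_orth_proj_add:
  fixes S :: "'b::euclidean_space set"
  assumes "subspace S"
  shows "(norm (f - orth_proj S (f + x)))\<^sup>2 = (norm (f - orth_proj S f))\<^sup>2 + (norm (orth_proj S x))\<^sup>2"
proof -
  have "orthogonal (f - orth_proj S f) (- orth_proj S x)"
    using assms by (simp add: orthogonal_def orth_proj_orthogonal orth_proj_in_subspace subspace_neg)
  then have "(norm ((f - orth_proj S f) + (- orth_proj S x)))\<^sup>2
      = (norm (f - orth_proj S f))\<^sup>2 + (norm (orth_proj S x))\<^sup>2"
    by (simp only: norm_add_Pythagorean norm_minus_cancel)
  moreover have "(f - orth_proj S f) + (- orth_proj S x) = f - orth_proj S (f + x)"
    by (simp add: orth_proj_add[OF assms])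
  ultimately show ?thesis by metis
qed

lemma norm_residual_orth_proj_add:
  fixes S :: "'b::euclidean_space set"
  assumes "subspace S"
  shows "(norm (f + x - orth_proj S (f + x)))\<^sup>2
    = (norm (f - orth_proj S f))\<^sup>2 + 2 * inner (f - orth_proj S f) x + (norm x)\<^sup>2 - (norm (orth_proj S x))\<^sup>2"
proof -
  let ?a = "f - orth_proj S f" and ?P = "orth_proj S x"
  have "?P \<in> S" using assms by (rule orth_proj_in_subspace)
  then have a_P: "inner ?a ?P = 0" and x_P: "inner (x - ?P) ?P = 0"
    using assms by (auto simp: orth_proj_orthogonal)
  have "(norm x)\<^sup>2 = (norm (x - ?P))\<^sup>2 + (norm ?P)\<^sup>2"
    using norm_add_Pythagorean[of "x - ?P" ?P] x_P by (simp add: orthogonal_def)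
  moreover have "(norm (?a + (x - ?P)))\<^sup>2 = (norm ?a)\<^sup>2 + 2 * inner ?a x + (norm (x - ?P))\<^sup>2"
    using a_P by (simp add: power2_norm_eq_inner inner_add_left inner_add_right inner_diff_right inner_commute)
  ultimately show ?thesis
    by (simp add: orth_proj_add[OF assms] algebra_simps)
qed

section \<open>Sub-Gaussian random vectors\<close>

locale subgaussian_vector = prob_space M for M :: "'a measure" +
  fixes \<xi> :: "'a \<Rightarrow> real ^ 'n" and \<sigma> :: real
  assumes measurable_noise[measurable]: "\<xi> \<in> borel_measurable M"
    and indep_components: "indep_vars (\<lambda>_. borel) (\<lambda>i \<omega>. \<xi> \<omega> $ i) UNIV"
    and sigma_pos: "\<sigma> > 0"
    and integrable_exp_component: "\<And>i l. integrable M (\<lambda>\<omega>. exp (l * \<xi> \<omega> $ i))"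
    and ln_mgf_component_le: "\<And>i l. ln (expectation (\<lambda>\<omega>. exp (l * \<xi> \<omega> $ i))) \<le> l\<^sup>2 * \<sigma>\<^sup>2 / 2"
begin

lemma measurable_component[measurable]: "(\<lambda>\<omega>. \<xi> \<omega> $ i) \<in> borel_measurable M"
  by (rule measurable_compose[OF measurable_noise borel_measurable_nth])

lemma integrable_component: "integrable M (\<lambda>\<omega>. \<xi> \<omega> $ i)"
proof -
  have "\<bar>x\<bar> \<le> exp x + exp (- x)" for x :: real
    using exp_ge_add_one_self[of x] exp_ge_add_one_self[of "- x"] exp_gt_zero[of x] exp_gt_zero[of "- x"]
    by linarith
  then have "AE \<omega> in M. norm (\<xi> \<omega> $ i) \<le> norm (exp (1 * \<xi> \<omega> $ i) + exp ((-1) * \<xi> \<omega> $ i))"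
    by (intro AE_I2) (simp add: add_pos_pos)
  moreover have "integrable M (\<lambda>\<omega>. exp (1 * \<xi> \<omega> $ i) + exp ((-1) * \<xi> \<omega> $ i))"
    by (intro Bochner_Integration.integrable_add integrable_exp_component)
  ultimately show ?thesis
    using Bochner_Integration.integrable_bound measurable_component by blast
qed

lemma exp_expectation_le: "exp (l * expectation (\<lambda>\<omega>. \<xi> \<omega> $ i)) \<le> expectation (\<lambda>\<omega>. exp (l * \<xi> \<omega> $ i))"
proof -
  have "exp (expectation (\<lambda>\<omega>. l * \<xi> \<omega> $ i)) \<le> expectation (\<lambda>\<omega>. exp (l * \<xi> \<omega> $ i))"
    by (rule jensens_inequality[where I=UNIV and q=exp])
      (simp_all add: integrable_component integrable_exp_component exp_convex)
  then show ?thesis by simp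
qed

lemma mgf_component_le: "expectation (\<lambda>\<omega>. exp (l * \<xi> \<omega> $ i)) \<le> exp (l\<^sup>2 * \<sigma>\<^sup>2 / 2)"
proof -
  let ?I = "expectation (\<lambda>\<omega>. exp (l * \<xi> \<omega> $ i))"
  have "?I > 0" using exp_gt_zero exp_expectation_le[of l i] by (rule less_le_trans)
  then have "?I = exp (ln ?I)" by simp
  also have "\<dots> \<le> exp (l\<^sup>2 * \<sigma>\<^sup>2 / 2)" using ln_mgf_component_le by simp
  finally show ?thesis .
qed

lemma nn_integral_exp_inner_le:
  "(\<integral>\<^sup>+\<omega>. ennreal (exp (t * inner w (\<xi> \<omega>))) \<partial>M) \<le> ennreal (exp (t\<^sup>2 * \<sigma>\<^sup>2 * (norm w)\<^sup>2 / 2))"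
proof -
  have "ennreal (exp (t * inner w (\<xi> \<omega>))) = (\<Prod>i\<in>UNIV. ennreal (exp ((t * w $ i) * \<xi> \<omega> $ i)))" for \<omega>
    by (simp add: inner_vec_def sum_distrib_left exp_sum prod_ennreal mult.assoc)
  then have "(\<integral>\<^sup>+\<omega>. ennreal (exp (t * inner w (\<xi> \<omega>))) \<partial>M)
      = (\<Prod>i\<in>UNIV. \<integral>\<^sup>+\<omega>. ennreal (exp ((t * w $ i) * \<xi> \<omega> $ i)) \<partial>M)"
    by (simp, intro indep_vars_nn_integral indep_vars_compose2[OF indep_components]) auto
  also have "\<dots> \<le> (\<Prod>i\<in>UNIV. ennreal (exp ((t * w $ i)\<^sup>2 * \<sigma>\<^sup>2 / 2)))"
  proof (intro prod_mono_ennreal)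
    fix i :: 'n
    have "(\<integral>\<^sup>+\<omega>. ennreal (exp ((t * w $ i) * \<xi> \<omega> $ i)) \<partial>M)
        = ennreal (expectation (\<lambda>\<omega>. exp ((t * w $ i) * \<xi> \<omega> $ i)))"
      by (intro nn_integral_eq_integral integrable_exp_component) auto
    then show "(\<integral>\<^sup>+\<omega>. ennreal (exp ((t * w $ i) * \<xi> \<omega> $ i)) \<partial>M) \<le> ennreal (exp ((t * w $ i)\<^sup>2 * \<sigma>\<^sup>2 / 2))"
      by (simp add: ennreal_leI mgf_component_le)
  qed
  also have "\<dots> = ennreal (exp (t\<^sup>2 * \<sigma>\<^sup>2 * (norm w)\<^sup>2 / 2))"
  proof -
    have "(norm w)\<^sup>2 = (\<Sum>i\<in>UNIV. (w $ i)\<^sup>2)"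
      unfolding power2_norm_eq_inner inner_vec_def by (simp add: power2_eq_square)
    then have "(\<Sum>i\<in>UNIV. (t * w $ i)\<^sup>2 * \<sigma>\<^sup>2 / 2) = t\<^sup>2 * \<sigma>\<^sup>2 * (norm w)\<^sup>2 / 2"
      by (simp add: sum_distrib_left sum_divide_distrib power_mult_distrib algebra_simps)
    then show ?thesis by (simp add: prod_ennreal exp_sum[symmetric])
  qed
  finally show ?thesis .
qed

text \<open>Gaussian decoupling: \<open>exp (\<Sum>u\<in>B. \<langle>u,\<xi>\<rangle>\<^sup>2 / (4\<sigma>\<^sup>2))\<close> is the average over independent
  standard Gaussians \<open>g u\<close> of \<open>exp \<langle>\<Sum>u\<in>B. g u u, \<xi>\<rangle> / (\<sigma>\<surd>2)\<close>; by Fubini the linear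
  moment bound can then be applied for each fixed \<open>g\<close>.\<close>
lemma nn_integral_exp_sum_inner_sq_le:
  assumes B: "orthonormal B"
  shows "(\<integral>\<^sup>+\<omega>. ennreal (exp ((\<Sum>u\<in>B. (inner u (\<xi> \<omega>))\<^sup>2) / (4 * \<sigma>\<^sup>2))) \<partial>M) \<le> ennreal (sqrt 2 ^ card B)"
proof -
  have fin: "finite B" using B by (simp add: orthonormal_def)
  define G where "G = PiM B (\<lambda>_. std_normal)"
  interpret G: product_prob_space "\<lambda>_. std_normal" B by (rule product_prob_space_std_normal)
  have "pair_sigma_finite M G"
    unfolding pair_sigma_finite_def G_def
    by (intro conjI prob_space_imp_sigma_finite G.P.prob_space_axioms prob_space_axioms)
  define t where "t = 1 / (\<sigma> * sqrt 2)"
  have t2: "t\<^sup>2 = 1 / (2 * \<sigma>\<^sup>2)" unfolding t_def by (simp add: power_divide power_mult_distrib)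
  define H where "H \<omega> g = ennreal (exp (t * inner (\<Sum>u\<in>B. g u *\<^sub>R u) (\<xi> \<omega>)))" for \<omega> g
  have H_measurable: "case_prod H \<in> borel_measurable (M \<Otimes>\<^sub>M G)"
    unfolding H_def G_def by measurable
  have "(\<integral>\<^sup>+\<omega>. ennreal (exp ((\<Sum>u\<in>B. (inner u (\<xi> \<omega>))\<^sup>2) / (4 * \<sigma>\<^sup>2))) \<partial>M)
      = (\<integral>\<^sup>+\<omega>. (\<integral>\<^sup>+g. H \<omega> g \<partial>G) \<partial>M)"
    unfolding H_def G_def nn_integral_std_normal_exp_inner[OF fin] t2 by simp
  also have "\<dots> = (\<integral>\<^sup>+g. (\<integral>\<^sup>+\<omega>. H \<omega> g \<partial>M) \<partial>G)"
    using pair_sigma_finite.Fubini'[OF \<open>pair_sigma_finite M G\<close> H_measurable] by simp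
  also have "\<dots> \<le> (\<integral>\<^sup>+g. ennreal (exp (t\<^sup>2 * \<sigma>\<^sup>2 * (norm (\<Sum>u\<in>B. g u *\<^sub>R u))\<^sup>2 / 2)) \<partial>G)"
    unfolding H_def by (intro nn_integral_mono nn_integral_exp_inner_le)
  also have "\<dots> = (\<integral>\<^sup>+g. ennreal (exp ((\<Sum>u\<in>B. (g u)\<^sup>2) / 4)) \<partial>G)"
    using sigma_pos by (simp add: norm_sum_scaleR_orthonormal[OF B] t2)
  also have "\<dots> = ennreal (sqrt 2 ^ card B)"
    unfolding G_def by (rule nn_integral_std_normal_exp_sum_square[OF fin])
  finally show ?thesis .
qed

text \<open>By Jensen, \<open>l \<mu> \<le> l\<^sup>2\<sigma>\<^sup>2/2\<close> for every \<open>l\<close>; the choice \<open>l = \<mu>/\<sigma>\<^sup>2\<close> forces \<open>\<mu> = 0\<close>.\<close>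
lemma expectation_component: "expectation (\<lambda>\<omega>. \<xi> \<omega> $ i) = 0"
proof -
  define \<mu> where "\<mu> = expectation (\<lambda>\<omega>. \<xi> \<omega> $ i)"
  define l where "l = \<mu> / \<sigma>\<^sup>2"
  have "exp (l * \<mu>) \<le> exp (l\<^sup>2 * \<sigma>\<^sup>2 / 2)"
    unfolding \<mu>_def using exp_expectation_le mgf_component_le by (rule order_trans)
  then have "l * \<mu> \<le> l\<^sup>2 * \<sigma>\<^sup>2 / 2" by simp
  then have "\<mu>\<^sup>2 \<le> \<mu>\<^sup>2 / 2"
    using sigma_pos by (simp add: l_def power2_eq_square field_simps)
  then show ?thesis by (simp add: \<mu>_def)
qed

lemma integrable_inner: "integrable M (\<lambda>\<omega>. inner v (\<xi> \<omega>))"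
  unfolding inner_vec_def inner_real_def by (intro Bochner_Integration.integrable_sum integrable_mult_right integrable_component)

lemma expectation_inner: "expectation (\<lambda>\<omega>. inner v (\<xi> \<omega>)) = 0"
  unfolding inner_vec_def inner_real_def
  by (simp add: Bochner_Integration.integral_sum integrable_component expectation_component)

lemma integrable_sum_inner_sq:
  assumes B: "orthonormal B"
  shows "integrable M (\<lambda>\<omega>. \<Sum>u\<in>B. (inner u (\<xi> \<omega>))\<^sup>2)"
proof (rule integrableI_bounded)
  let ?Q = "\<lambda>\<omega>. \<Sum>u\<in>B. (inner u (\<xi> \<omega>))\<^sup>2"
  define s where "s = 4 * \<sigma>\<^sup>2"
  have s: "s > 0" using sigma_pos by (simp add: s_def)
  have "(\<integral>\<^sup>+\<omega>. ennreal (norm (?Q \<omega>)) \<partial>M) \<le> (\<integral>\<^sup>+\<omega>. ennreal s * ennreal (exp (?Q \<omega> / s)) \<partial>M)"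
  proof (intro nn_integral_mono)
    fix \<omega>
    have "?Q \<omega> / s \<le> exp (?Q \<omega> / s)"
      using exp_ge_add_one_self[of "?Q \<omega> / s"] by linarith
    then have "?Q \<omega> \<le> s * exp (?Q \<omega> / s)" using s by (simp add: field_simps)
    then show "ennreal (norm (?Q \<omega>)) \<le> ennreal s * ennreal (exp (?Q \<omega> / s))"
      using s by (simp add: sum_nonneg ennreal_mult[symmetric] ennreal_leI)
  qed
  also have "\<dots> = ennreal s * (\<integral>\<^sup>+\<omega>. ennreal (exp (?Q \<omega> / s)) \<partial>M)"
    by (rule nn_integral_cmult) measurable
  also have "\<dots> \<le> ennreal s * ennreal (sqrt 2 ^ card B)"
    unfolding s_def by (intro mult_left_mono nn_integral_exp_sum_inner_sq_le B) auto
  also have "\<dots> < \<infinity>" by (simp add: ennreal_mult_less_top)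
  finally show "(\<integral>\<^sup>+\<omega>. ennreal (norm (?Q \<omega>)) \<partial>M) < \<infinity>" .
qed simp

text \<open>A Chernoff bound at scale \<open>s = 4\<sigma>\<^sup>2\<close>: \<open>(Q - T)\<^sub>+ \<le> s exp ((Q - T) / s - 1)\<close>.\<close>
lemma nn_integral_sum_inner_sq_excess_le:
  assumes B: "orthonormal B" and card: "card B \<le> d + 1" and \<Delta>: "\<Delta> \<ge> 0"
  shows "(\<integral>\<^sup>+\<omega>. ennreal ((\<Sum>u\<in>B. (inner u (\<xi> \<omega>))\<^sup>2) - kappa\<^sup>2 * \<sigma>\<^sup>2 * (real d + \<Delta>)) \<partial>M)
           \<le> ennreal (4 * \<sigma>\<^sup>2 * exp (- \<Delta>))"
proof -
  let ?Q = "\<lambda>\<omega>. \<Sum>u\<in>B. (inner u (\<xi> \<omega>))\<^sup>2"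
  define s where "s = 4 * \<sigma>\<^sup>2"
  define T where "T = kappa\<^sup>2 * \<sigma>\<^sup>2 * (real d + \<Delta>)"
  define A where "A = s * exp (-1) * exp (- (T / s))"
  have s: "s > 0" using sigma_pos by (simp add: s_def)
  have A: "A \<ge> 0" by (simp add: A_def s_def)
  have "?Q \<omega> - T \<le> A * exp (?Q \<omega> / s)" for \<omega>
  proof -
    have "(?Q \<omega> - T) / s \<le> exp ((?Q \<omega> - T) / s - 1)"
      using exp_ge_add_one_self[of "(?Q \<omega> - T) / s - 1"] by linarith
    also have "\<dots> = exp (-1) * exp (- (T / s)) * exp (?Q \<omega> / s)"
      by (simp add: exp_add[symmetric] diff_divide_distrib)
    finally show ?thesis using s by (simp add: A_def field_simps)
  qed
  then have "(\<integral>\<^sup>+\<omega>. ennreal (?Q \<omega> - T) \<partial>M) \<le> (\<integral>\<^sup>+\<omega>. ennreal A * ennreal (exp (?Q \<omega> / s)) \<partial>M)"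
    using A by (intro nn_integral_mono) (simp add: ennreal_mult[symmetric] ennreal_leI)
  also have "\<dots> = ennreal A * (\<integral>\<^sup>+\<omega>. ennreal (exp (?Q \<omega> / s)) \<partial>M)"
    by (rule nn_integral_cmult) measurable
  also have "\<dots> \<le> ennreal A * ennreal (sqrt 2 ^ card B)"
    unfolding s_def by (intro mult_left_mono nn_integral_exp_sum_inner_sq_le B) auto
  also have "\<dots> = ennreal (s * (exp (-1) * exp (- (kappa\<^sup>2 * (real d + \<Delta>) / 4)) * sqrt 2 ^ card B))"
    using A sigma_pos by (simp add: ennreal_mult A_def T_def s_def mult_ac)
  also have "\<dots> \<le> ennreal (s * exp (- \<Delta>))"
    using s by (intro ennreal_leI mult_left_mono kappa_tail_factor_le card \<Delta>) simp
  finally show ?thesis unfolding T_def s_def .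
qed

end

lemma nn_integral_pos_part_eq_neg_part:
  fixes X :: "'a \<Rightarrow> real"
  assumes X: "integrable M X" "integral\<^sup>L M X = 0"
  shows "(\<integral>\<^sup>+\<omega>. ennreal (X \<omega>) \<partial>M) = (\<integral>\<^sup>+\<omega>. ennreal (- X \<omega>) \<partial>M)"
proof -
  have "(\<integral>\<^sup>+\<omega>. ennreal (X \<omega>) \<partial>M) = ennreal (enn2real (\<integral>\<^sup>+\<omega>. ennreal (X \<omega>) \<partial>M))"
    using integrableD(2)[OF X(1)] by (simp add: ennreal_enn2real_if)
  also have "enn2real (\<integral>\<^sup>+\<omega>. ennreal (X \<omega>) \<partial>M) = enn2real (\<integral>\<^sup>+\<omega>. ennreal (- X \<omega>) \<partial>M)"
    using real_lebesgue_integral_def[OF X(1)] X(2) by linarith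
  also have "ennreal \<dots> = (\<integral>\<^sup>+\<omega>. ennreal (- X \<omega>) \<partial>M)"
    using integrableD(3)[OF X(1)] by (simp add: ennreal_enn2real_if)
  finally show ?thesis .
qed

lemma ennreal_max_0: "ennreal (max y 0) = ennreal y"
  by (cases "y \<le> 0") (simp_all add: max_def ennreal_neg)

lemma ennreal_add_neg_le_of_le:
  fixes a c x h :: real
  assumes "a \<ge> 0" "c \<ge> 0" "a \<le> c + x + h"
  shows "ennreal a + ennreal (- x) \<le> ennreal c + ennreal x + ennreal h"
proof -
  have "ennreal a + ennreal (- x) = ennreal (a + max (- x) 0)"
    using ennreal_plus[of a "max (- x) 0"] assms(1) by (simp add: ennreal_max_0)
  also have "\<dots> \<le> ennreal (c + max x 0 + max h 0)"
    using assms(3) by (intro ennreal_leI) (simp add: max_def)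
  also have "\<dots> = ennreal c + ennreal x + ennreal h"
    using assms(2) by (simp add: ennreal_plus ennreal_max_0)
  finally show ?thesis .
qed

text \<open>The positive and negative parts of the centred \<open>X\<close> have equal finite integrals and cancel.\<close>
lemma (in prob_space) nn_integral_le_of_le_centred:
  assumes X: "integrable M X" "expectation X = 0"
    and A: "A \<in> borel_measurable M" "\<And>\<omega>. A \<omega> \<ge> 0"
    and G: "G \<in> borel_measurable M" and c: "c \<ge> 0"
    and le: "\<And>\<omega>. A \<omega> \<le> c + X \<omega> + H \<omega>" and H_le: "\<And>\<omega>. ennreal (H \<omega>) \<le> G \<omega>"
  shows "(\<integral>\<^sup>+\<omega>. ennreal (A \<omega>) \<partial>M) \<le> ennreal c + (\<integral>\<^sup>+\<omega>. G \<omega> \<partial>M)"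
proof -
  have mX: "X \<in> borel_measurable M" using X(1) by (rule borel_measurable_integrable)
  have eA: "(\<lambda>\<omega>. ennreal (A \<omega>)) \<in> borel_measurable M"
    by (rule measurable_compose[OF A(1) measurable_ennreal])
  have eX: "(\<lambda>\<omega>. ennreal (X \<omega>)) \<in> borel_measurable M"
    by (rule measurable_compose[OF mX measurable_ennreal])
  have eX': "(\<lambda>\<omega>. ennreal (- X \<omega>)) \<in> borel_measurable M"
    by (rule measurable_compose[OF borel_measurable_uminus[OF mX] measurable_ennreal])
  have ecX: "(\<lambda>\<omega>. ennreal c + ennreal (X \<omega>)) \<in> borel_measurable M"
    by (rule borel_measurable_add[OF borel_measurable_const eX])
  have pointwise: "ennreal (A \<omega>) + ennreal (- X \<omega>) \<le> ennreal c + ennreal (X \<omega>) + G \<omega>" for \<omega>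
  proof -
    have "ennreal (A \<omega>) + ennreal (- X \<omega>) \<le> ennreal c + ennreal (X \<omega>) + ennreal (H \<omega>)"
      by (rule ennreal_add_neg_le_of_le[OF A(2) c le])
    also have "\<dots> \<le> ennreal c + ennreal (X \<omega>) + G \<omega>"
      using H_le by (rule add_left_mono)
    finally show ?thesis .
  qed
  define N where "N = (\<integral>\<^sup>+\<omega>. ennreal (- X \<omega>) \<partial>M)"
  have "(\<integral>\<^sup>+\<omega>. ennreal (A \<omega>) \<partial>M) + N = (\<integral>\<^sup>+\<omega>. ennreal (A \<omega>) + ennreal (- X \<omega>) \<partial>M)"
    unfolding N_def by (rule nn_integral_add[OF eA eX', symmetric])
  also have "\<dots> \<le> (\<integral>\<^sup>+\<omega>. ennreal c + ennreal (X \<omega>) + G \<omega> \<partial>M)"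
    by (intro nn_integral_mono pointwise)
  also have "\<dots> = (\<integral>\<^sup>+\<omega>. ennreal c + ennreal (X \<omega>) \<partial>M) + (\<integral>\<^sup>+\<omega>. G \<omega> \<partial>M)"
    by (rule nn_integral_add[OF ecX G])
  also have "(\<integral>\<^sup>+\<omega>. ennreal c + ennreal (X \<omega>) \<partial>M) = ennreal c + N"
    unfolding N_def nn_integral_pos_part_eq_neg_part[OF X, symmetric]
    by (simp add: nn_integral_add[OF borel_measurable_const eX] emeasure_space_1)
  finally have "N + (\<integral>\<^sup>+\<omega>. ennreal (A \<omega>) \<partial>M) \<le> N + (ennreal c + (\<integral>\<^sup>+\<omega>. G \<omega> \<partial>M))"
    by (simp only: ac_simps)
  moreover have "N \<noteq> \<infinity>" unfolding N_def using integrableD(3)[OF X(1)] .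
  ultimately show ?thesis by (simp add: ennreal_add_left_cancel_le)
qed

lemma nn_integral_le_div_of_scaled_le:
  fixes f :: "'a \<Rightarrow> real"
  assumes a: "a > 0" and f: "f \<in> borel_measurable M" and c: "c \<ge> 0"
    and le: "(\<integral>\<^sup>+x. ennreal (a * f x) \<partial>M) \<le> ennreal c"
  shows "(\<integral>\<^sup>+x. ennreal (f x) \<partial>M) \<le> ennreal (c / a)"
proof -
  have "(\<integral>\<^sup>+x. ennreal (a * f x) \<partial>M) = ennreal a * (\<integral>\<^sup>+x. ennreal (f x) \<partial>M)"
    using a by (simp add: ennreal_mult' nn_integral_cmult measurable_compose[OF f measurable_ennreal])
  moreover have "ennreal (1 / a) * ennreal a = 1"
    using a by (simp add: ennreal_mult[symmetric])
  ultimately have "(\<integral>\<^sup>+x. ennreal (f x) \<partial>M) = ennreal (1 / a) * (\<integral>\<^sup>+x. ennreal (a * f x) \<partial>M)"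
    by (simp add: mult.assoc[symmetric])
  also have "\<dots> \<le> ennreal (1 / a) * ennreal c"
    by (intro mult_left_mono le) simp
  also have "\<dots> = ennreal (c / a)"
    using a c by (simp add: ennreal_mult[symmetric])
  finally show ?thesis .
qed

lemma nn_integral_count_space_ge:
  assumes "a \<in> A"
  shows "f a \<le> (\<integral>\<^sup>+x. f x \<partial>count_space A)"
proof -
  have "f a = (\<integral>\<^sup>+x. f a * indicator {a} x \<partial>count_space A)"
    using assms by (simp add: nn_integral_cmult_indicator)
  also have "\<dots> \<le> (\<integral>\<^sup>+x. f x \<partial>count_space A)"
    by (intro nn_integral_mono) (simp split: split_indicator)
  finally show ?thesis .
qed

lemma nn_integral_count_space_eq_infsum:
  fixes g :: "'m \<Rightarrow> real"
  assumes "g summable_on A" "\<And>x. x \<in> A \<Longrightarrow> g x \<ge> 0"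
  shows "(\<integral>\<^sup>+x. ennreal (g x) \<partial>count_space A) = ennreal (infsum g A)"
proof -
  note abs = abs_summable_equivalent[THEN iffD1, OF summable_on_iff_abs_summable_on_real[THEN iffD1, OF assms(1)]]
  show ?thesis
    using nn_integral_conv_infsetsum[OF abs assms(2)] infsetsum_infsum[OF abs] by simp
qed

lemma le_mult_INF_add:
  fixes g :: "'m \<Rightarrow> real"
  assumes "A \<noteq> {}" "c > 0" "\<And>a. a \<in> A \<Longrightarrow> x \<le> c * g a + d"
  shows "x \<le> c * (\<Sqinter>a\<in>A. g a) + d"
proof -
  have "(x - d) / c \<le> (\<Sqinter>a\<in>A. g a)"
    using assms by (intro cINF_greatest) (auto simp: field_simps)
  then show ?thesis using assms(2) by (simp add: field_simps)
qed

section \<open>Penalized model selection\<close>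

text \<open>The cross term \<open>2x\<close> of the selected model is split by AM-GM into \<open>b/K\<close> and \<open>K x\<^sup>2/b\<close>;
  \<open>x = 0\<close> when \<open>b = 0\<close>, so the junk value \<open>x\<^sup>2/0 = 0\<close> is harmless.\<close>
lemma penalized_selection_le:
  fixes K b x q p b0 x0 q0 p0 :: real
  assumes K: "K > 1" and b: "b \<ge> 0" "b = 0 \<Longrightarrow> x = 0" and q: "q \<ge> 0" "q0 \<ge> 0"
    and crit: "b + 2 * x - q + p \<le> b0 + 2 * x0 - q0 + p0"
  shows "(1 - 1 / K) * (b + q) \<le> b0 + p0 + 2 * x0 + (K * (q + x\<^sup>2 / b) - p)"
proof -
  have amgm: "- 2 * x \<le> b / K + K * x\<^sup>2 / b"
  proof (cases "b = 0")
    case False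
    then have "0 \<le> (b + K * x)\<^sup>2 / (K * b)" using b K by simp
    also have "\<dots> = b / K + K * x\<^sup>2 / b + 2 * x"
      using False K by (simp add: power2_eq_square field_simps)
    finally show ?thesis by simp
  qed (use b in simp)
  have "(2 - 1 / K) * q \<le> K * q"
  proof (intro mult_right_mono q)
    have "0 \<le> (K - 1)\<^sup>2 / K" using K by simp
    also have "\<dots> = K - (2 - 1 / K)" using K by (simp add: power2_eq_square field_simps)
    finally show "2 - 1 / K \<le> K" by simp
  qed
  moreover have "(1 - 1 / K) * (b + q) = b - b / K + q - q / K" "(2 - 1 / K) * q = 2 * q - q / K"
    using K by (simp_all add: field_simps)
  ultimately show ?thesis
    using crit amgm q by (simp add: algebra_simps)
qed

lemma oracle_constants_le:
  assumes K: "K > 1"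
  shows "K / (K - 1) \<le> K * (K\<^sup>2 + K - 1) / (K - 1) ^ 3"
    and "4 * K * (K / (K - 1)) \<le> K ^ 3 * kappa\<^sup>2 / (K - 1)\<^sup>2"
proof -
  have "K / (K - 1) = K * (K - 1)\<^sup>2 / (K - 1) ^ 3"
    using K by (simp add: power2_eq_square power3_eq_cube)
  also have "\<dots> \<le> K * (K\<^sup>2 + K - 1) / (K - 1) ^ 3"
    using K by (intro divide_right_mono mult_left_mono) (auto simp: power2_eq_square algebra_simps)
  finally show "K / (K - 1) \<le> K * (K\<^sup>2 + K - 1) / (K - 1) ^ 3" .
  have "4 * K * (K / (K - 1)) = K\<^sup>2 * (4 * (K - 1)) / (K - 1)\<^sup>2"
  proof -
    obtain d where d: "K = d + 1" "d > 0" using K by (intro that[of "K - 1"]) auto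
    show ?thesis unfolding d(1) using d(2) by (simp add: power2_eq_square field_simps)
  qed
  also have "\<dots> \<le> K\<^sup>2 * (kappa\<^sup>2 * K) / (K - 1)\<^sup>2"
    using K by (intro divide_right_mono mult_left_mono) (auto simp: kappa_def)
  also have "\<dots> = K ^ 3 * kappa\<^sup>2 / (K - 1)\<^sup>2"
    by (simp add: power2_eq_square power3_eq_cube ac_simps)
  finally show "4 * K * (K / (K - 1)) \<le> K ^ 3 * kappa\<^sup>2 / (K - 1)\<^sup>2" .
qed

locale model_selection = subgaussian_vector M \<xi> \<sigma>
  for M :: "'a measure" and \<xi> :: "'a \<Rightarrow> real ^ 'n" and \<sigma> :: real +
  fixes f :: "real ^ 'n" and Y :: "'a \<Rightarrow> real ^ 'n"
    and \<M> :: "'m set" and S :: "'m \<Rightarrow> (real ^ 'n) set"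
    and \<Delta> pen :: "'m \<Rightarrow> real" and K :: real and mhat :: "'a \<Rightarrow> 'm"
  assumes Y_eq: "\<And>\<omega>. Y \<omega> = f + \<xi> \<omega>"
    and countable_models: "countable \<M>" and models_nonempty: "\<M> \<noteq> {}"
    and subspace_model: "\<And>m. m \<in> \<M> \<Longrightarrow> subspace (S m)"
    and weight_nonneg: "\<And>m. m \<in> \<M> \<Longrightarrow> \<Delta> m \<ge> 0"
    and weights_summable: "(\<lambda>m. exp (- \<Delta> m)) summable_on \<M>"
    and K_gt_1: "K > 1"
    and pen_nonneg: "\<And>m. m \<in> \<M> \<Longrightarrow> pen m \<ge> 0"
    and pen_ge: "\<And>m. m \<in> \<M> \<Longrightarrow> pen m \<ge> K * kappa\<^sup>2 * \<sigma>\<^sup>2 * (real (dim (S m)) + \<Delta> m)"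
    and mhat_in_models: "\<And>\<omega>. mhat \<omega> \<in> \<M>"
    and mhat_minimizes: "\<And>\<omega> m. m \<in> \<M> \<Longrightarrow>
           (norm (Y \<omega> - orth_proj (S (mhat \<omega>)) (Y \<omega>)))\<^sup>2 + pen (mhat \<omega>)
             \<le> (norm (Y \<omega> - orth_proj (S m) (Y \<omega>)))\<^sup>2 + pen m"
    and measurable_selected_loss: "(\<lambda>\<omega>. (norm (f - orth_proj (S (mhat \<omega>)) (Y \<omega>)))\<^sup>2) \<in> borel_measurable M"
begin

definition loss :: "'m \<Rightarrow> 'a \<Rightarrow> real" where
  "loss m \<omega> = (norm (f - orth_proj (S m) (Y \<omega>)))\<^sup>2"

definition bias_vec :: "'m \<Rightarrow> real ^ 'n" where
  "bias_vec m = f - orth_proj (S m) f"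

definition bias :: "'m \<Rightarrow> real" where
  "bias m = (norm (bias_vec m))\<^sup>2"

definition proj_noise :: "'m \<Rightarrow> 'a \<Rightarrow> real" where
  "proj_noise m \<omega> = (norm (orth_proj (S m) (\<xi> \<omega>)))\<^sup>2"

text \<open>\<open>proj_noise m + \<langle>bias_vec m, \<xi>\<rangle>\<^sup>2 / bias m\<close> is the squared norm of the projection of \<open>\<xi>\<close> onto
  \<open>S m \<oplus> span {bias_vec m}\<close>, a space of dimension at most \<open>dim (S m) + 1\<close>
  (for \<open>bias m = 0\<close> the junk value \<open>x / 0 = 0\<close> gives the right answer).\<close>
definition excess :: "'m \<Rightarrow> 'a \<Rightarrow> real" where
  "excess m \<omega> = K * (proj_noise m \<omega> + (inner (bias_vec m) (\<xi> \<omega>))\<^sup>2 / bias m) - pen m"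

definition total_excess :: "'a \<Rightarrow> ennreal" where
  "total_excess \<omega> = (\<integral>\<^sup>+m. ennreal (excess m \<omega>) \<partial>count_space \<M>)"

definition weight_sum :: real where
  "weight_sum = infsum (\<lambda>m. exp (- \<Delta> m)) \<M>"

lemma bias_nonneg: "bias m \<ge> 0"
  by (simp add: bias_def)

lemma weight_sum_nonneg: "weight_sum \<ge> 0"
  unfolding weight_sum_def by (intro infsum_nonneg) simp

lemma loss_eq: "m \<in> \<M> \<Longrightarrow> loss m \<omega> = bias m + proj_noise m \<omega>"
  unfolding loss_def bias_def bias_vec_def proj_noise_def Y_eq
  by (rule norm_diff_orth_proj_add[OF subspace_model])

lemma residual_eq:
  "m \<in> \<M> \<Longrightarrow> (norm (Y \<omega> - orth_proj (S m) (Y \<omega>)))\<^sup>2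
     = bias m + 2 * inner (bias_vec m) (\<xi> \<omega>) + (norm (\<xi> \<omega>))\<^sup>2 - proj_noise m \<omega>"
  unfolding bias_def bias_vec_def proj_noise_def Y_eq
  by (rule norm_residual_orth_proj_add[OF subspace_model])

lemma excess_eq_sum_inner_sq:
  assumes m: "m \<in> \<M>"
  obtains B where "orthonormal B" "card B \<le> dim (S m) + 1"
    "\<And>\<omega>. excess m \<omega> = K * (\<Sum>u\<in>B. (inner u (\<xi> \<omega>))\<^sup>2) - pen m"
proof -
  obtain B where B: "orthonormal B" "span B = S m" "card B = dim (S m)"
    using orthonormal_basis_exists[OF subspace_model[OF m]] .
  have "inner (bias_vec m) u = 0" if "u \<in> B" for u
    unfolding bias_vec_def
    using orth_proj_orthogonal[OF subspace_model[OF m]] that B(2) span_base by blast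
  then obtain B' where B': "orthonormal B'" "card B' \<le> card B + 1"
    "\<And>y. (\<Sum>u\<in>B'. (inner u y)\<^sup>2) = (\<Sum>u\<in>B. (inner u y)\<^sup>2) + (inner (bias_vec m) y)\<^sup>2 / (norm (bias_vec m))\<^sup>2"
    using orthonormal_insert_normalized[OF B(1)] by blast
  show ?thesis
  proof (rule that[OF B'(1)])
    show "card B' \<le> dim (S m) + 1" using B'(2) B(3) by simp
    show "excess m \<omega> = K * (\<Sum>u\<in>B'. (inner u (\<xi> \<omega>))\<^sup>2) - pen m" for \<omega>
      unfolding excess_def proj_noise_def bias_def B'(3) norm_orth_proj[OF B(1,2)] ..
  qed
qed

lemma measurable_excess:
  assumes m: "m \<in> \<M>"
  shows "excess m \<in> borel_measurable M"
proof -
  obtain B where "\<And>\<omega>. excess m \<omega> = K * (\<Sum>u\<in>B. (inner u (\<xi> \<omega>))\<^sup>2) - pen m"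
    using excess_eq_sum_inner_sq[OF m] by blast
  then have "excess m = (\<lambda>\<omega>. K * (\<Sum>u\<in>B. (inner u (\<xi> \<omega>))\<^sup>2) - pen m)" by (rule ext)
  also have "\<dots> \<in> borel_measurable M" by measurable
  finally show ?thesis .
qed

lemma nn_integral_excess_le:
  assumes m: "m \<in> \<M>"
  shows "(\<integral>\<^sup>+\<omega>. ennreal (excess m \<omega>) \<partial>M) \<le> ennreal (4 * K * \<sigma>\<^sup>2 * exp (- \<Delta> m))"
proof -
  obtain B where B: "orthonormal B" "card B \<le> dim (S m) + 1"
    and excess: "\<And>\<omega>. excess m \<omega> = K * (\<Sum>u\<in>B. (inner u (\<xi> \<omega>))\<^sup>2) - pen m"
    using excess_eq_sum_inner_sq[OF m] by blast
  define T where "T = kappa\<^sup>2 * \<sigma>\<^sup>2 * (real (dim (S m)) + \<Delta> m)"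
  have K: "K > 0" using K_gt_1 by simp
  have "pen m \<ge> K * T" using pen_ge[OF m] by (simp add: T_def mult_ac)
  then have "ennreal (excess m \<omega>) \<le> ennreal K * ennreal ((\<Sum>u\<in>B. (inner u (\<xi> \<omega>))\<^sup>2) - T)" for \<omega>
    using K by (simp add: excess ennreal_mult'[symmetric] ennreal_leI algebra_simps)
  then have "(\<integral>\<^sup>+\<omega>. ennreal (excess m \<omega>) \<partial>M)
      \<le> (\<integral>\<^sup>+\<omega>. ennreal K * ennreal ((\<Sum>u\<in>B. (inner u (\<xi> \<omega>))\<^sup>2) - T) \<partial>M)"
    by (rule nn_integral_mono)
  also have "\<dots> = ennreal K * (\<integral>\<^sup>+\<omega>. ennreal ((\<Sum>u\<in>B. (inner u (\<xi> \<omega>))\<^sup>2) - T) \<partial>M)"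
    by (rule nn_integral_cmult) measurable
  also have "\<dots> \<le> ennreal K * ennreal (4 * \<sigma>\<^sup>2 * exp (- \<Delta> m))"
    unfolding T_def
    by (intro mult_left_mono nn_integral_sum_inner_sq_excess_le B weight_nonneg m) simp
  also have "\<dots> = ennreal (4 * K * \<sigma>\<^sup>2 * exp (- \<Delta> m))"
    using K by (simp add: ennreal_mult[symmetric] mult_ac)
  finally show ?thesis .
qed

lemma measurable_total_excess: "total_excess \<in> borel_measurable M"
proof -
  have "(\<lambda>(m, \<omega>). ennreal (excess m \<omega>)) \<in> borel_measurable (count_space \<M> \<Otimes>\<^sub>M M)"
  proof (rule measurable_pair_measure_countable1[OF countable_models])
    fix m assume "m \<in> \<M>"
    show "(\<lambda>\<omega>. case (m, \<omega>) of (m, \<omega>) \<Rightarrow> ennreal (excess m \<omega>)) \<in> borel_measurable M"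
      unfolding case_prod_conv
      by (rule measurable_compose[OF measurable_excess[OF \<open>m \<in> \<M>\<close>] measurable_ennreal])
  qed
  from measurable_pair_swap[OF this]
  have "(\<lambda>(\<omega>, m). ennreal (excess m \<omega>)) \<in> borel_measurable (M \<Otimes>\<^sub>M count_space \<M>)"
    by (simp only: case_prod_conv)
  then show ?thesis
    unfolding total_excess_def[abs_def]
    by (rule sigma_finite_measure.borel_measurable_nn_integral[OF
        sigma_finite_measure_count_space_countable[OF countable_models]])
qed

lemma nn_integral_total_excess_le:
  "(\<integral>\<^sup>+\<omega>. total_excess \<omega> \<partial>M) \<le> ennreal (4 * K * \<sigma>\<^sup>2 * weight_sum)"
proof -
  have "(\<integral>\<^sup>+\<omega>. total_excess \<omega> \<partial>M) = (\<integral>\<^sup>+m. (\<integral>\<^sup>+\<omega>. ennreal (excess m \<omega>) \<partial>M) \<partial>count_space \<M>)"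
    unfolding total_excess_def
    by (rule nn_integral_count_space_nn_integral[OF countable_models])
      (rule measurable_compose[OF measurable_excess measurable_ennreal])
  also have "\<dots> \<le> (\<integral>\<^sup>+m. ennreal (4 * K * \<sigma>\<^sup>2) * ennreal (exp (- \<Delta> m)) \<partial>count_space \<M>)"
  proof (intro nn_integral_mono)
    fix m assume "m \<in> space (count_space \<M>)"
    then have "(\<integral>\<^sup>+\<omega>. ennreal (excess m \<omega>) \<partial>M) \<le> ennreal (4 * K * \<sigma>\<^sup>2 * exp (- \<Delta> m))"
      by (simp add: nn_integral_excess_le)
    also have "\<dots> = ennreal (4 * K * \<sigma>\<^sup>2) * ennreal (exp (- \<Delta> m))"
      using K_gt_1 by (simp add: ennreal_mult[symmetric])
    finally show "(\<integral>\<^sup>+\<omega>. ennreal (excess m \<omega>) \<partial>M) \<le> ennreal (4 * K * \<sigma>\<^sup>2) * ennreal (exp (- \<Delta> m))" .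
  qed
  also have "\<dots> = ennreal (4 * K * \<sigma>\<^sup>2) * ennreal weight_sum"
    unfolding weight_sum_def
    by (simp add: nn_integral_cmult nn_integral_count_space_eq_infsum[OF weights_summable])
  also have "\<dots> = ennreal (4 * K * \<sigma>\<^sup>2 * weight_sum)"
    using K_gt_1 weight_sum_nonneg by (simp add: ennreal_mult)
  finally show ?thesis .
qed


lemma selected_loss_le:
  assumes m: "m \<in> \<M>"
  shows "(1 - 1 / K) * loss (mhat \<omega>) \<omega> \<le> bias m + pen m + 2 * inner (bias_vec m) (\<xi> \<omega>) + excess (mhat \<omega>) \<omega>"
proof -
  let ?m = "mhat \<omega>"
  have m': "?m \<in> \<M>" by (rule mhat_in_models)
  have crit: "bias ?m + 2 * inner (bias_vec ?m) (\<xi> \<omega>) - proj_noise ?m \<omega> + pen ?m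
      \<le> bias m + 2 * inner (bias_vec m) (\<xi> \<omega>) - proj_noise m \<omega> + pen m"
    using mhat_minimizes[OF m, of \<omega>] residual_eq[OF m', of \<omega>] residual_eq[OF m, of \<omega>] by linarith
  have "(1 - 1 / K) * (bias ?m + proj_noise ?m \<omega>)
      \<le> bias m + pen m + 2 * inner (bias_vec m) (\<xi> \<omega>)
         + (K * (proj_noise ?m \<omega> + (inner (bias_vec ?m) (\<xi> \<omega>))\<^sup>2 / bias ?m) - pen ?m)"
    by (intro penalized_selection_le[OF K_gt_1 _ _ _ _ crit]) (simp_all add: bias_def proj_noise_def)
  then show ?thesis by (simp only: loss_eq[OF m'] excess_def)
qed

lemma nn_integral_scaled_selected_loss_le:
  assumes m: "m \<in> \<M>"
  shows "(\<integral>\<^sup>+\<omega>. ennreal ((1 - 1 / K) * loss (mhat \<omega>) \<omega>) \<partial>M)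
    \<le> ennreal (bias m + pen m + 4 * K * \<sigma>\<^sup>2 * weight_sum)"
proof -
  have c: "bias m + pen m \<ge> 0"
    using pen_nonneg[OF m] bias_nonneg[of m] by simp
  have "(\<integral>\<^sup>+\<omega>. ennreal ((1 - 1 / K) * loss (mhat \<omega>) \<omega>) \<partial>M)
      \<le> ennreal (bias m + pen m) + (\<integral>\<^sup>+\<omega>. total_excess \<omega> \<partial>M)"
  proof (rule nn_integral_le_of_le_centred[where X = "\<lambda>\<omega>. 2 * inner (bias_vec m) (\<xi> \<omega>)"
        and H = "\<lambda>\<omega>. excess (mhat \<omega>) \<omega>"])
    show "integrable M (\<lambda>\<omega>. 2 * inner (bias_vec m) (\<xi> \<omega>))"
      by (intro integrable_mult_right integrable_inner)
    show "expectation (\<lambda>\<omega>. 2 * inner (bias_vec m) (\<xi> \<omega>)) = 0"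
      by (simp add: expectation_inner)
    show "(\<lambda>\<omega>. (1 - 1 / K) * loss (mhat \<omega>) \<omega>) \<in> borel_measurable M"
      unfolding loss_def by (rule borel_measurable_times[OF borel_measurable_const measurable_selected_loss])
    show "(1 - 1 / K) * loss (mhat \<omega>) \<omega> \<ge> 0" for \<omega>
      using K_gt_1 by (simp add: loss_def)
    show "total_excess \<in> borel_measurable M" by (rule measurable_total_excess)
    show "bias m + pen m \<ge> 0" by (rule c)
    show "(1 - 1 / K) * loss (mhat \<omega>) \<omega> \<le> bias m + pen m + 2 * inner (bias_vec m) (\<xi> \<omega>) + excess (mhat \<omega>) \<omega>" for \<omega>
      by (rule selected_loss_le[OF m])
    show "ennreal (excess (mhat \<omega>) \<omega>) \<le> total_excess \<omega>" for \<omega>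
      unfolding total_excess_def by (rule nn_integral_count_space_ge[OF mhat_in_models])
  qed
  also have "\<dots> \<le> ennreal (bias m + pen m) + ennreal (4 * K * \<sigma>\<^sup>2 * weight_sum)"
    by (intro add_left_mono nn_integral_total_excess_le)
  also have "\<dots> = ennreal (bias m + pen m + 4 * K * \<sigma>\<^sup>2 * weight_sum)"
    using c K_gt_1 weight_sum_nonneg by (simp add: ennreal_plus)
  finally show ?thesis .
qed

lemma nn_integral_selected_loss_le:
  assumes m: "m \<in> \<M>"
  shows "(\<integral>\<^sup>+\<omega>. ennreal (loss (mhat \<omega>) \<omega>) \<partial>M)
    \<le> ennreal (K / (K - 1) * (bias m + pen m + 4 * K * \<sigma>\<^sup>2 * weight_sum))"
proof -
  have "(\<integral>\<^sup>+\<omega>. ennreal (loss (mhat \<omega>) \<omega>) \<partial>M)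
      \<le> ennreal ((bias m + pen m + 4 * K * \<sigma>\<^sup>2 * weight_sum) / (1 - 1 / K))"
  proof (rule nn_integral_le_div_of_scaled_le)
    show "1 - 1 / K > 0" using K_gt_1 by simp
    show "(\<lambda>\<omega>. loss (mhat \<omega>) \<omega>) \<in> borel_measurable M"
      unfolding loss_def by (rule measurable_selected_loss)
    show "bias m + pen m + 4 * K * \<sigma>\<^sup>2 * weight_sum \<ge> 0"
      using pen_nonneg[OF m] bias_nonneg[of m] K_gt_1 weight_sum_nonneg by simp
  qed (rule nn_integral_scaled_selected_loss_le[OF m])
  also have "(bias m + pen m + 4 * K * \<sigma>\<^sup>2 * weight_sum) / (1 - 1 / K)
      = K / (K - 1) * (bias m + pen m + 4 * K * \<sigma>\<^sup>2 * weight_sum)"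
    using K_gt_1 by (simp add: field_simps)
  finally show ?thesis .
qed

lemma bias_le_expectation_loss:
  assumes m: "m \<in> \<M>"
  shows "bias m \<le> expectation (loss m)"
proof -
  obtain B where B: "orthonormal B" "span B = S m"
    using orthonormal_basis_exists[OF subspace_model[OF m]] by blast
  have noise_eq: "proj_noise m = (\<lambda>\<omega>. \<Sum>u\<in>B. (inner u (\<xi> \<omega>))\<^sup>2)"
    by (rule ext) (simp add: proj_noise_def norm_orth_proj[OF B])
  have "loss m = (\<lambda>\<omega>. bias m + proj_noise m \<omega>)"
    by (rule ext) (rule loss_eq[OF m])
  then have "expectation (loss m) = expectation (\<lambda>\<omega>. bias m + proj_noise m \<omega>)"
    by simp
  also have "\<dots> = bias m + expectation (proj_noise m)"
    using integrable_sum_inner_sq[OF B(1)] by (simp add: noise_eq prob_space)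
  finally show ?thesis
    using integral_nonneg_AE[of "proj_noise m" M] by (simp add: proj_noise_def)
qed

lemma nn_integral_selected_loss_le_risk:
  assumes m: "m \<in> \<M>"
  shows "(\<integral>\<^sup>+\<omega>. ennreal (loss (mhat \<omega>) \<omega>) \<partial>M)
    \<le> ennreal (K * (K\<^sup>2 + K - 1) / (K - 1) ^ 3 * (expectation (loss m) + pen m)
         + K ^ 3 * kappa\<^sup>2 * \<sigma>\<^sup>2 / (K - 1)\<^sup>2 * weight_sum)"
proof -
  note constants = oracle_constants_le[OF K_gt_1]
  have "0 \<le> bias m + pen m" "bias m + pen m \<le> expectation (loss m) + pen m"
    using pen_nonneg[OF m] bias_le_expectation_loss[OF m] bias_nonneg[of m] by linarith+
  moreover have "0 \<le> K * (K\<^sup>2 + K - 1) / (K - 1) ^ 3"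
    using order_trans[OF _ constants(1)] K_gt_1 by simp
  ultimately have "K / (K - 1) * (bias m + pen m)
      \<le> K * (K\<^sup>2 + K - 1) / (K - 1) ^ 3 * (expectation (loss m) + pen m)"
    using constants(1) by (intro mult_mono) simp_all
  moreover have "K / (K - 1) * (4 * K * \<sigma>\<^sup>2 * weight_sum) \<le> K ^ 3 * kappa\<^sup>2 * \<sigma>\<^sup>2 / (K - 1)\<^sup>2 * weight_sum"
    using mult_right_mono[OF constants(2), of "\<sigma>\<^sup>2 * weight_sum"] weight_sum_nonneg
    by (simp add: mult_ac)
  ultimately have "K / (K - 1) * (bias m + pen m + 4 * K * \<sigma>\<^sup>2 * weight_sum)
      \<le> K * (K\<^sup>2 + K - 1) / (K - 1) ^ 3 * (expectation (loss m) + pen m)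
         + K ^ 3 * kappa\<^sup>2 * \<sigma>\<^sup>2 / (K - 1)\<^sup>2 * weight_sum"
    by (simp add: distrib_left)
  then show ?thesis
    using nn_integral_selected_loss_le[OF m] by (meson ennreal_leI order_trans)
qed

theorem oracle_inequality:
  "(\<integral>\<^sup>+\<omega>. ennreal (loss (mhat \<omega>) \<omega>) \<partial>M)
     \<le> ennreal (K * (K\<^sup>2 + K - 1) / (K - 1) ^ 3 * (\<Sqinter>m\<in>\<M>. expectation (loss m) + pen m)
          + K ^ 3 * kappa\<^sup>2 * \<sigma>\<^sup>2 / (K - 1)\<^sup>2 * weight_sum)"
proof -
  define C1 where "C1 = K * (K\<^sup>2 + K - 1) / (K - 1) ^ 3"
  define C2 where "C2 = K ^ 3 * kappa\<^sup>2 * \<sigma>\<^sup>2 / (K - 1)\<^sup>2"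
  note bound = nn_integral_selected_loss_le_risk[folded C1_def C2_def]
  have C1_pos: "C1 > 0"
    using less_le_trans[OF _ oracle_constants_le(1)[OF K_gt_1]] K_gt_1 by (simp add: C1_def)
  have C2_nonneg: "C2 \<ge> 0"
    using K_gt_1 by (simp add: C2_def)
  obtain m0 where m0: "m0 \<in> \<M>" using models_nonempty by blast
  have "(\<integral>\<^sup>+\<omega>. ennreal (loss (mhat \<omega>) \<omega>) \<partial>M) < top"
    using bound[OF m0] ennreal_less_top by (rule le_less_trans)
  then obtain l where l: "(\<integral>\<^sup>+\<omega>. ennreal (loss (mhat \<omega>) \<omega>) \<partial>M) = ennreal l" "l \<ge> 0"
    by (cases "\<integral>\<^sup>+\<omega>. ennreal (loss (mhat \<omega>) \<omega>) \<partial>M") auto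
  have "l \<le> C1 * (\<Sqinter>m\<in>\<M>. expectation (loss m) + pen m) + C2 * weight_sum"
  proof (rule le_mult_INF_add[OF models_nonempty C1_pos])
    fix m assume m: "m \<in> \<M>"
    have "0 \<le> expectation (loss m) + pen m"
      using pen_nonneg[OF m] bias_le_expectation_loss[OF m] bias_nonneg[of m] by linarith
    then have "0 \<le> C1 * (expectation (loss m) + pen m) + C2 * weight_sum"
      using C1_pos C2_nonneg weight_sum_nonneg by simp
    moreover have "ennreal l \<le> ennreal (C1 * (expectation (loss m) + pen m) + C2 * weight_sum)"
      using bound[OF m] unfolding l(1) .
    ultimately show "l \<le> C1 * (expectation (loss m) + pen m) + C2 * weight_sum"
      by (simp only: ennreal_le_iff)
  qed
  then show ?thesis
    unfolding l(1) C1_def[symmetric] C2_def[symmetric] by (rule ennreal_leI)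
qed

end

theorem mainTheorem7:
  fixes M :: "'a measure"
    and f :: "real ^ 'n"
    and \<xi> Y :: "'a \<Rightarrow> real ^ 'n"
    and \<sigma> K :: real
    and \<M> :: "'m set"
    and S :: "'m \<Rightarrow> (real ^ 'n) set"
    and \<Delta> pen :: "'m \<Rightarrow> real"
    and mhat :: "'a \<Rightarrow> 'm"
  assumes "prob_space M"
    and "CARD('n) \<ge> 2"
    and "\<xi> \<in> borel_measurable M"
    and "prob_space.indep_vars M (\<lambda>_. borel) (\<lambda>i \<omega>. \<xi> \<omega> $ i) UNIV"
    and "\<sigma> > 0"
    and "\<And>i l. integrable M (\<lambda>\<omega>. exp (l * \<xi> \<omega> $ i))"
    and "\<And>i l. ln (integral\<^sup>L M (\<lambda>\<omega>. exp (l * \<xi> \<omega> $ i))) \<le> l\<^sup>2 * \<sigma>\<^sup>2 / 2"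
    and "\<And>\<omega>. Y \<omega> = f + \<xi> \<omega>"
    and "countable \<M>" and "\<M> \<noteq> {}"
    and "\<And>m. m \<in> \<M> \<Longrightarrow> subspace (S m)"
    and "\<And>m. m \<in> \<M> \<Longrightarrow> \<Delta> m \<ge> 0"
    and "(\<lambda>m. exp (- \<Delta> m)) summable_on \<M>"
    and "K > 1"
    and "\<And>m. m \<in> \<M> \<Longrightarrow> pen m \<ge> 0"
    and "\<And>m. m \<in> \<M> \<Longrightarrow> pen m \<ge> K * kappa\<^sup>2 * \<sigma>\<^sup>2 * (real (dim (S m)) + \<Delta> m)"
    and "\<And>\<omega>. mhat \<omega> \<in> \<M>"
    and "\<And>\<omega> m. m \<in> \<M> \<Longrightarrow>
           (norm (Y \<omega> - orth_proj (S (mhat \<omega>)) (Y \<omega>)))\<^sup>2 + pen (mhat \<omega>)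
             \<le> (norm (Y \<omega> - orth_proj (S m) (Y \<omega>)))\<^sup>2 + pen m"
    and "(\<lambda>\<omega>. (norm (f - orth_proj (S (mhat \<omega>)) (Y \<omega>)))\<^sup>2) \<in> borel_measurable M"
  shows "(\<integral>\<^sup>+ \<omega>. ennreal ((norm (f - orth_proj (S (mhat \<omega>)) (Y \<omega>)))\<^sup>2) \<partial>M)
           \<le> ennreal (K * (K\<^sup>2 + K - 1) / (K - 1) ^ 3
                  * (\<Sqinter>m\<in>\<M>. integral\<^sup>L M (\<lambda>\<omega>. (norm (f - orth_proj (S m) (Y \<omega>)))\<^sup>2) + pen m)
                + K ^ 3 * kappa\<^sup>2 * \<sigma>\<^sup>2 / (K - 1)\<^sup>2 * infsum (\<lambda>m. exp (- \<Delta> m)) \<M>)"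
proof -
  interpret model_selection M \<xi> \<sigma> f Y \<M> S \<Delta> pen K mhat
    by (intro model_selection.intro subgaussian_vector.intro subgaussian_vector_axioms.intro
        model_selection_axioms.intro; rule assms)
  show ?thesis
    using oracle_inequality unfolding loss_def[abs_def] weight_sum_def .
qed

end
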